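(* For all integers $0\le a\le b$, $\mathrm{Incr}(\zeta(a,b))=\zeta(a,b+1)$; that is, applying $\mathrm{Incr}$ to the $\zeta$-decomposition of $B(a,b)$ yields a list of bucket structures whose buckets are exactly those of the $\zeta$-decomposition of $B(a,b+1)$, each carrying uniformly distributed random samples of its bucket, with all samples mutually independent.
   Context: Let $p_0,p_1,\dots$ be a stream. For integers $x<y$, the bucket $B(x,y)=\{p_i: x\le i\le y-1\}$. A bucket structure $BS(x,y)$ stores $p_x$, $x$, $y$, the timestamp of $p_x$, and two random samples $R_{x,y},Q_{x,y}$, each uniformly distributed on $B(x,y)$, together with the indices of the sampled elements. Logarithms are base 2. The $\zeta$-decomposition is the ordered list of bucket structures (with all samples mutually independent) defined by $\zeta(b,b)=\langle BS(b,b+1)\rangle$ and, for $a<b$, $\zeta(a,b)=\langle BS(a,c),\zeta(c,b)\rangle$ where $c=a+2^{\lfloor\log(b+1-a)\rfloor-1}$. Given the new element $p_{b+1}$, the operator $\mathrm{Incr}$ is defined by $\mathrm{Incr}(\zeta(b,b))=\langle BS(b,b+1),BS(b+1,b+2)\rangle$ (the new structure with fresh independent samples), and for $a<b$, $\mathrm{Incr}(\zeta(a,b))=\langle BS(a,v),\mathrm{Incr}(\zeta(v,b))\rangle$, where: if $\lfloor\log(b+2-a)\rfloor=\lfloor\log(b+1-a)\rfloor$ then $v=c$ and $BS(a,c)$ (the first structure of $\zeta(a,b)$) is kept unchanged; otherwise, letting $BS(a,c),BS(c,d)$ be the first two structures of $\zeta(a,b)$, $v=d$ and $BS(a,d)$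 is formed by merging them: $R_{a,d}$ equals $R_{a,c}$ with probability $1/2$ and $R_{c,d}$ otherwise (using a fresh independent coin), and likewise for $Q_{a,d}$ with an independent coin. *)

theory Defs
  imports "HOL-Probability.Probability"
begin

text \<open>A bucket structure BS(x,y) is represented by (x, y, r, q), where r and q are
  the indices of the two sampled elements R and Q (uniform on {x..<y}).
  The stored p_x and its timestamp are deterministic functions of x and are omitted.\<close>

type_synonym bstruct = "nat \<times> nat \<times> nat \<times> nat"

definition bx :: "bstruct \<Rightarrow> nat" where "bx s = fst s"
definition by' :: "bstruct \<Rightarrow> nat" where "by' s = fst (snd s)"
definition bR :: "bstruct \<Rightarrow> nat" where "bR s = fst (snd (snd s))"
definition bQ :: "bstruct \<Rightarrow> nat" where "bQ s = snd (snd (snd s))"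

function zbuckets :: "nat \<Rightarrow> nat \<Rightarrow> (nat \<times> nat) list" where
  "zbuckets a b =
     (if a < b then
        (let c = a + 2 ^ nat (\<lfloor>log 2 (real (b + 1 - a))\<rfloor> - 1)
         in (a, c) # zbuckets c b)
      else [(b, b + 1)])"
  by auto
termination
proof (relation "Wellfounded.measure (\<lambda>(a, b). b - a)")
  fix a b :: nat and c
  assume ab: "a < b" and c: "c = a + 2 ^ nat (\<lfloor>log 2 (real (b + 1 - a))\<rfloor> - 1)"
  have aux: "\<And>k::nat. a < b \<Longrightarrow> b - (a + 2 ^ k) < b - a"
    by (simp add: diff_less_mono2)
  from aux[OF ab] c show "((c, b), a, b) \<in> Wellfounded.measure (\<lambda>(a, b). b - a)" by simp
qed auto

fun with_samples :: "(nat \<times> nat) list \<Rightarrow> bstruct list pmf" where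
  "with_samples [] = return_pmf []"
| "with_samples ((x, y) # bs) =
     do { r \<leftarrow> pmf_of_set {x..<y};
          q \<leftarrow> pmf_of_set {x..<y};
          rest \<leftarrow> with_samples bs;
          return_pmf ((x, y, r, q) # rest) }"

definition zeta :: "nat \<Rightarrow> nat \<Rightarrow> bstruct list pmf" where
  "zeta a b = with_samples (zbuckets a b)"

definition fresh :: "nat \<Rightarrow> bstruct pmf" where
  "fresh b = do { r \<leftarrow> pmf_of_set {b+1..<b+2};
                  q \<leftarrow> pmf_of_set {b+1..<b+2};
                  return_pmf (b + 1, b + 2, r, q) }"

text \<open>The operator Incr, upon arrival of p_(b+1), applied to a decomposition whose
  last index is b; a is read off the first structure.\<close>
fun incr :: "nat \<Rightarrow> bstruct list \<Rightarrow> bstruct list pmf" where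
  "incr b [] = return_pmf []"
| "incr b [s] =
     (if bx s = b then map_pmf (\<lambda>n. [s, n]) (fresh b) else return_pmf [s])"
| "incr b (s # t # rest) =
     (if bx s = b then map_pmf (\<lambda>n. [s, n]) (fresh b)
      else if \<lfloor>log 2 (real (b + 2 - bx s))\<rfloor> = \<lfloor>log 2 (real (b + 1 - bx s))\<rfloor>
      then map_pmf (Cons s) (incr b (t # rest))
      else do { c1 \<leftarrow> bernoulli_pmf (1/2);
                c2 \<leftarrow> bernoulli_pmf (1/2);
                tl' \<leftarrow> incr b rest;
                return_pmf ((bx s, by' t, if c1 then bR s else bR t,
                                          if c2 then bQ s else bQ t) # tl') })"

end

theory Submission
  imports Defs
begin

text \<open>
  With n = b + 1 - a and 2m \<le> n < 4m for a power of two m, \<zeta>(a,b) splits off a first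
  bucket of length m and recurses, so by induction on b - a only the first buckets matter.
  If adding one element does not change \<lfloor>log n\<rfloor>, then \<zeta>(a,b+1) has the same first bucket
  and Incr keeps it. Otherwise n + 1 = 4m, so \<zeta>(a,b) starts with two buckets of length m
  whose union is the first bucket of \<zeta>(a,b+1). A fair coin choosing between independent
  uniform samples of two disjoint sets of equal size yields a uniform sample of their union,
  and independence lets the samples be reordered so that this applies to R and Q separately.
\<close>

declare zbuckets.simps [simp del]

lemma floor_log2_eq:
  assumes "2 ^ k \<le> n" "n < 2 ^ (k + 1)"
  shows "\<lfloor>log 2 (real n)\<rfloor> = int k"
proof -
  have "0 < (2::nat) ^ k" by simp
  then have "n > 0" using assms(1) by linarith
  then show ?thesis using floor_log_nat_eq_powr_iff[of 2 n k] assms by simp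
qed

lemma zbuckets_Cons:
  assumes "2 * 2 ^ k \<le> b + 1 - a" "b + 1 - a < 4 * 2 ^ k"
  shows "zbuckets a b = (a, a + 2 ^ k) # zbuckets (a + 2 ^ k) b"
proof -
  have "(2::nat) \<le> 2 * 2 ^ k" by simp
  then have "a < b" using assms(1) by linarith
  moreover have "nat (\<lfloor>log 2 (real (b + 1 - a))\<rfloor> - 1) = k"
    using floor_log2_eq[of "k + 1" "b + 1 - a"] assms by simp
  ultimately show ?thesis by (subst zbuckets.simps) (simp add: Let_def)
qed

lemma zbuckets_self: "zbuckets b b = [(b, b + 1)]"
  by (subst zbuckets.simps) simp

lemma zbuckets_Suc_self: "zbuckets b (b + 1) = [(b, b + 1), (b + 1, b + 2)]"
  using zbuckets_Cons[where a = b and b = "b + 1" and k = 0] by (simp add: zbuckets_self)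

lemma zbuckets_not_Nil: "zbuckets a b \<noteq> []"
  by (subst zbuckets.simps) (simp add: Let_def)

lemma length_with_samples: "l \<in> set_pmf (with_samples bs) \<Longrightarrow> length l = length bs"
  by (induction bs arbitrary: l rule: with_samples.induct) auto

lemma pmf_of_set_Un_coin:
  fixes X Y :: "'a set"
  assumes "finite X" "finite Y" "X \<noteq> {}" "Y \<noteq> {}" "X \<inter> Y = {}" "card X = card Y"
  shows "do {r \<leftarrow> pmf_of_set X; r' \<leftarrow> pmf_of_set Y; c \<leftarrow> bernoulli_pmf (1/2);
             return_pmf (if c then r else r')} = pmf_of_set (X \<union> Y)"
proof -
  have "do {r \<leftarrow> pmf_of_set X; r' \<leftarrow> pmf_of_set Y; c \<leftarrow> bernoulli_pmf (1/2);
            return_pmf (if c then r else r')}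
      = do {c \<leftarrow> bernoulli_pmf (1/2); r \<leftarrow> pmf_of_set X; r' \<leftarrow> pmf_of_set Y;
            return_pmf (if c then r else r')}"
    by (subst bind_commute_pmf[of "pmf_of_set Y"], subst bind_commute_pmf[of "pmf_of_set X"]) (rule refl)
  also have "\<dots> = do {c \<leftarrow> pmf_of_set UNIV; pmf_of_set (if c then X else Y)}"
    by (auto simp: bernoulli_pmf_half_conv_pmf_of_set bind_return_pmf' intro!: bind_pmf_cong)
  also have "\<dots> = pmf_of_set (\<Union>c. if c then X else Y)"
    using assms by (intro pmf_of_set_UN[symmetric]) (auto simp: disjoint_family_on_def)
  also have "(\<Union>c. if c then X else Y) = X \<union> Y"
    by (auto split: if_splits)
  finally show ?thesis .
qed

lemma bind_pmf_interleave:
  fixes A B :: "'a pmf" and E :: "'b pmf" and W :: "'c pmf"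
    and f :: "'a \<Rightarrow> 'a \<Rightarrow> 'a \<Rightarrow> 'a \<Rightarrow> 'c \<Rightarrow> 'b \<Rightarrow> 'b \<Rightarrow> 'd pmf"
  shows
   "do {r \<leftarrow> A; q \<leftarrow> A; r' \<leftarrow> B; q' \<leftarrow> B; w \<leftarrow> W; c \<leftarrow> E; c' \<leftarrow> E; f r q r' q' w c c'}
 = do {r \<leftarrow> A; r' \<leftarrow> B; c \<leftarrow> E; q \<leftarrow> A; q' \<leftarrow> B; c' \<leftarrow> E; w \<leftarrow> W; f r q r' q' w c c'}"
  apply (subst bind_commute_pmf[of W])+
  apply (rule bind_pmf_cong[OF refl])
  apply (subst bind_commute_pmf[of A B])
  apply (rule bind_pmf_cong[OF refl])
  apply (subst bind_commute_pmf[of B E])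
  apply (subst bind_commute_pmf[of A E])
  apply (rule refl)
  done

lemma with_samples_incr_singleton:
  "bind_pmf (with_samples [(b, b + 1)]) (incr b) = with_samples [(b, b + 1), (b + 1, b + 2)]"
  by (simp add: fresh_def bx_def map_pmf_def bind_assoc_pmf bind_return_pmf)

lemma with_samples_incr_keep:
  assumes "x \<noteq> b" and "\<lfloor>log 2 (real (b + 2 - x))\<rfloor> = \<lfloor>log 2 (real (b + 1 - x))\<rfloor>"
    and "bs \<noteq> []" and "bind_pmf (with_samples bs) (incr b) = with_samples bs'"
  shows "bind_pmf (with_samples ((x, y) # bs)) (incr b) = with_samples ((x, y) # bs')"
proof -
  let ?U = "pmf_of_set {x..<y}"
  have incr_Cons: "incr b (s # rest) = map_pmf (Cons s) (incr b rest)"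
    if "bx s = x" "rest \<noteq> []" for s rest
    using that assms(1,2) by (cases rest) auto
  have "bind_pmf (with_samples ((x, y) # bs)) (incr b)
      = do {r \<leftarrow> ?U; q \<leftarrow> ?U; rest \<leftarrow> with_samples bs; map_pmf (Cons (x, y, r, q)) (incr b rest)}"
    using length_with_samples assms(3)
    by (force simp: bind_assoc_pmf bind_return_pmf bx_def intro!: bind_pmf_cong incr_Cons)
  also have "\<dots> = do {r \<leftarrow> ?U; q \<leftarrow> ?U; map_pmf (Cons (x, y, r, q)) (bind_pmf (with_samples bs) (incr b))}"
    by (simp add: map_bind_pmf)
  also have "\<dots> = with_samples ((x, y) # bs')"
    by (simp add: assms(4) map_pmf_def)
  finally show ?thesis .
qed

lemma with_samples_incr_merge:
  assumes "x \<noteq> b" and "\<lfloor>log 2 (real (b + 2 - x))\<rfloor> \<noteq> \<lfloor>log 2 (real (b + 1 - x))\<rfloor>"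
    and "x < y" "y < z" "y - x = z - y"
    and "bind_pmf (with_samples bs) (incr b) = with_samples bs'"
  shows "bind_pmf (with_samples ((x, y) # (y, z) # bs)) (incr b) = with_samples ((x, z) # bs')"
proof -
  let ?A = "pmf_of_set {x..<y}" and ?B = "pmf_of_set {y..<z}" and ?E = "bernoulli_pmf (1/2)"
  have incr_merge: "incr b ((x, y, r, q) # (y, z, r', q') # rest)
      = do {c \<leftarrow> ?E; c' \<leftarrow> ?E; tl \<leftarrow> incr b rest;
            return_pmf ((x, z, if c then r else r', if c' then q else q') # tl)}" for r q r' q' rest
    unfolding incr.simps(3) bx_def by'_def bR_def bQ_def fst_conv snd_conv
    using assms(1,2) by (simp only: if_False)
  have "bind_pmf (with_samples ((x, y) # (y, z) # bs)) (incr b)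
      = do {r \<leftarrow> ?A; q \<leftarrow> ?A; r' \<leftarrow> ?B; q' \<leftarrow> ?B; rest \<leftarrow> with_samples bs;
            c \<leftarrow> ?E; c' \<leftarrow> ?E; tl \<leftarrow> incr b rest;
            return_pmf ((x, z, if c then r else r', if c' then q else q') # tl)}"
    by (simp add: bind_assoc_pmf bind_return_pmf incr_merge del: incr.simps)
  also have "\<dots> = do {r \<leftarrow> ?A; r' \<leftarrow> ?B; c \<leftarrow> ?E; q \<leftarrow> ?A; q' \<leftarrow> ?B; c' \<leftarrow> ?E;
            rest \<leftarrow> with_samples bs; tl \<leftarrow> incr b rest;
            return_pmf ((x, z, if c then r else r', if c' then q else q') # tl)}"
    by (rule bind_pmf_interleave)
  also have "\<dots> = do {R \<leftarrow> pmf_of_set {x..<z}; Q \<leftarrow> pmf_of_set {x..<z};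
            tl \<leftarrow> bind_pmf (with_samples bs) (incr b); return_pmf ((x, z, R, Q) # tl)}"
  proof -
    have "{x..<y} \<union> {y..<z} = {x..<z}" using assms(3,4) by auto
    then have coin: "do {r \<leftarrow> ?A; r' \<leftarrow> ?B; c \<leftarrow> ?E; return_pmf (if c then r else r')} = pmf_of_set {x..<z}"
      using assms(3-5) by (subst pmf_of_set_Un_coin) auto
    then show ?thesis by (simp add: bind_assoc_pmf bind_return_pmf flip: coin)
  qed
  also have "\<dots> = with_samples ((x, z) # bs')"
    by (simp add: assms(6))
  finally show ?thesis .
qed

lemma zbuckets_incr_cases:
  assumes "a < b"
  obtains (keep) c where "a < c" "c \<le> b"
      "zbuckets a b = (a, c) # zbuckets c b" "zbuckets a (b + 1) = (a, c) # zbuckets c (b + 1)"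
      "\<lfloor>log 2 (real (b + 2 - a))\<rfloor> = \<lfloor>log 2 (real (b + 1 - a))\<rfloor>"
  | (merge) c d where "a < c" "c < d" "d \<le> b" "c - a = d - c"
      "zbuckets a b = (a, c) # (c, d) # zbuckets d b" "zbuckets a (b + 1) = (a, d) # zbuckets d (b + 1)"
      "\<lfloor>log 2 (real (b + 2 - a))\<rfloor> \<noteq> \<lfloor>log 2 (real (b + 1 - a))\<rfloor>"
proof -
  have "\<exists>j. 2 ^ j \<le> b + 1 - a \<and> b + 1 - a < 2 ^ (j + 1)"
    using assms by (intro ex_power_ivl1) auto
  then obtain j where j: "2 ^ j \<le> b + 1 - a" "b + 1 - a < 2 ^ (j + 1)"
    by blast
  obtain k where "j = k + 1"
    using j assms by (cases j) auto
  define m where "m = (2::nat) ^ k"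
  have pow: "2 ^ (k + 1) = 2 * m" "2 ^ (k + 2) = 4 * m" "m \<ge> 1"
    by (simp_all add: m_def power_add)
  have n: "2 * m \<le> b + 1 - a" "b + 1 - a < 4 * m"
    using j pow \<open>j = k + 1\<close> by simp_all
  have split_b: "zbuckets a b = (a, a + m) # zbuckets (a + m) b"
    using zbuckets_Cons[where k = k, folded m_def] n by simp
  have log_b: "\<lfloor>log 2 (real (b + 1 - a))\<rfloor> = k + 1"
    using floor_log2_eq[of "k + 1" "b + 1 - a"] n pow by simp
  show ?thesis
  proof (cases "b + 2 - a < 4 * m")
    case True
    have "zbuckets a (b + 1) = (a, a + m) # zbuckets (a + m) (b + 1)"
      using zbuckets_Cons[where b = "b + 1" and k = k, folded m_def] True n by simp
    moreover have "\<lfloor>log 2 (real (b + 2 - a))\<rfloor> = k + 1"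
      using floor_log2_eq[of "k + 1" "b + 2 - a"] True n pow by simp
    ultimately show ?thesis
      using keep[of "a + m"] split_b log_b n pow by simp
  next
    case False
    then have n': "b + 2 - a = 4 * m" using n by simp
    have "zbuckets (a + m) b = (a + m, a + 2 * m) # zbuckets (a + 2 * m) b"
      using zbuckets_Cons[where a = "a + m" and b = b and k = k, folded m_def] n' pow
      by (simp add: mult_2 add.assoc)
    moreover have "zbuckets a (b + 1) = (a, a + 2 * m) # zbuckets (a + 2 * m) (b + 1)"
      using zbuckets_Cons[where b = "b + 1" and k = "k + 1", unfolded pow(1)] n' pow by simp
    moreover have "\<lfloor>log 2 (real (b + 2 - a))\<rfloor> = k + 2"
      unfolding n' m_def by (intro floor_log2_eq) (simp_all add: power_add)
    ultimately show ?thesis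
      using merge[of "a + m" "a + 2 * m"] split_b log_b n' pow by simp
  qed
qed

theorem lemma4p1:
  fixes a b :: nat
  assumes "a \<le> b"
  shows "bind_pmf (zeta a b) (incr b) = zeta a (b + 1)"
  using assms unfolding zeta_def
proof (induction "b - a" arbitrary: a rule: less_induct)
  case less
  show ?case
  proof (cases "a = b")
    case True
    then show ?thesis
      by (simp only: zbuckets_self zbuckets_Suc_self with_samples_incr_singleton)
  next
    case False
    with less.prems have "a < b" by simp
    then show ?thesis
    proof (cases rule: zbuckets_incr_cases)
      case (keep c)
      have "bind_pmf (with_samples (zbuckets c b)) (incr b) = with_samples (zbuckets c (b + 1))"
        using less.hyps[of c] keep(1,2) by simp
      then show ?thesis
        unfolding keep(3,4) using \<open>a < b\<close>
        by (intro with_samples_incr_keep[OF _ keep(5) zbuckets_not_Nil]) simp_all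
    next
      case (merge c d)
      have "bind_pmf (with_samples (zbuckets d b)) (incr b) = with_samples (zbuckets d (b + 1))"
        using less.hyps[of d] merge(1-3) by simp
      then show ?thesis
        unfolding merge(5,6) using \<open>a < b\<close> merge(1-4)
        by (intro with_samples_incr_merge[OF _ merge(7)]) simp_all
    qed
  qed
qed

end
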